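(* Let $n\ge2$ and let $\mathcal{A}$ be a complex algebra with basis $e_1,\dots,e_{n+1}$ whose structure constants satisfy ( * ), such that $\operatorname{Ann}\mathcal{A}=\langle e_{n+1}\rangle$, $e_1e_n=0$ and $e_i^2=e_{i+1}$ for all $1\le i\le n$. Suppose that the automorphisms of $\mathcal{A}/\langle e_{n+1}\rangle$ are exactly the linear maps $\bar e_1\mapsto\bar e_1+x\bar e_n$, $\bar e_i\mapsto\bar e_i$ ($2\le i\le n$), $x\in\mathbb{C}$, where $\bar e_i=e_i+\langle e_{n+1}\rangle$. Then the automorphisms of $\mathcal{A}$ are exactly the linear maps $e_1\mapsto e_1+xe_{n+1}$, $e_i\mapsto e_i$ ($2\le i\le n+1$), $x\in\mathbb{C}$.
   Context: Structure constants: $e_ie_j=\sum_kc_{ij}^ke_k$. Condition ( * ): $c_{ij}^k=0$ whenever $k\le\max\{i,j\}$. $\operatorname{Ann}\mathcal{A}=\{a\in\mathcal{A}: a\mathcal{A}+\mathcal{A}a=0\}$. *)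

theory Defs
  imports Main "HOL-Complex_Analysis.Complex_Analysis"
begin

text \<open>An N-dimensional complex algebra with basis e_1..e_N, given by structure
constants c i j k (e_i e_j = sum_k c i j k e_k), indices in {1..N}.
Elements are coordinate vectors nat => complex supported on {1..N};
linear maps are matrices nat => nat => complex supported on {1..N}^2,
column j being the image of e_j.\<close>

definition vecs :: "nat \<Rightarrow> (nat \<Rightarrow> complex) set" where
  "vecs N = {a. \<forall>k. k \<notin> {1..N} \<longrightarrow> a k = 0}"

definition basis_vec :: "nat \<Rightarrow> nat \<Rightarrow> complex" where
  "basis_vec i = (\<lambda>k. if k = i then 1 else 0)"

definition alg_mult :: "nat \<Rightarrow> (nat \<Rightarrow> nat \<Rightarrow> nat \<Rightarrow> complex)
    \<Rightarrow> (nat \<Rightarrow> complex) \<Rightarrow> (nat \<Rightarrow> complex) \<Rightarrow> (nat \<Rightarrow> complex)" where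
  "alg_mult N c a b = (\<lambda>k. if k \<in> {1..N}
      then (\<Sum>i\<in>{1..N}. \<Sum>j\<in>{1..N}. a i * b j * c i j k) else 0)"

definition mats :: "nat \<Rightarrow> (nat \<Rightarrow> nat \<Rightarrow> complex) set" where
  "mats N = {M. \<forall>i j. (i \<notin> {1..N} \<or> j \<notin> {1..N}) \<longrightarrow> M i j = 0}"

definition mat_apply :: "nat \<Rightarrow> (nat \<Rightarrow> nat \<Rightarrow> complex) \<Rightarrow> (nat \<Rightarrow> complex) \<Rightarrow> (nat \<Rightarrow> complex)" where
  "mat_apply N M a = (\<lambda>i. if i \<in> {1..N} then (\<Sum>j\<in>{1..N}. M i j * a j) else 0)"

definition alg_aut :: "nat \<Rightarrow> (nat \<Rightarrow> nat \<Rightarrow> nat \<Rightarrow> complex) \<Rightarrow> (nat \<Rightarrow> nat \<Rightarrow> complex) set" where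
  "alg_aut N c = {M. M \<in> mats N
      \<and> bij_betw (mat_apply N M) (vecs N) (vecs N)
      \<and> (\<forall>a\<in>vecs N. \<forall>b\<in>vecs N.
           mat_apply N M (alg_mult N c a b) = alg_mult N c (mat_apply N M a) (mat_apply N M b))}"

definition alg_ann :: "nat \<Rightarrow> (nat \<Rightarrow> nat \<Rightarrow> nat \<Rightarrow> complex) \<Rightarrow> (nat \<Rightarrow> complex) set" where
  "alg_ann N c = {a \<in> vecs N. \<forall>b\<in>vecs N. alg_mult N c a b = (\<lambda>_. 0) \<and> alg_mult N c b a = (\<lambda>_. 0)}"

definition cond_star :: "nat \<Rightarrow> (nat \<Rightarrow> nat \<Rightarrow> nat \<Rightarrow> complex) \<Rightarrow> bool" where
  "cond_star N c = (\<forall>i\<in>{1..N}. \<forall>j\<in>{1..N}. \<forall>k\<in>{1..N}. k \<le> max i j \<longrightarrow> c i j k = 0)"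

definition shear_mat :: "nat \<Rightarrow> complex \<Rightarrow> nat \<Rightarrow> nat \<Rightarrow> complex" where
  "shear_mat N x = (\<lambda>i j. if i \<in> {1..N} \<and> j \<in> {1..N}
      then (if i = j then 1 else 0) + (if i = N \<and> j = 1 then x else 0) else 0)"

end

theory Submission
  imports Defs
begin

text \<open>An automorphism maps the annihilator \<open>\<langle>e\<^sub>n\<^sub>+\<^sub>1\<rangle>\<close> onto itself, so its
  matrix is block triangular and its upper left block is an automorphism of the quotient,
  i.e. a shear \<open>e\<^sub>1 \<mapsto> e\<^sub>1 + y e\<^sub>n\<close>. Only the last row of the matrix is then unknown,
  and it is read off from the products: \<open>e\<^sub>n\<^sup>2 = e\<^sub>n\<^sub>+\<^sub>1\<close> forces the diagonal entry to be 1,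
  \<open>e\<^sub>n e\<^sub>1\<close> forces \<open>y = 0\<close>, and \<open>e\<^sub>i\<^sup>2 = e\<^sub>i\<^sub>+\<^sub>1\<close> kills the entries in columns \<open>2..n\<close>.
  Conversely the shears \<open>e\<^sub>1 \<mapsto> e\<^sub>1 + x e\<^sub>n\<^sub>+\<^sub>1\<close> are automorphisms, since \<open>e\<^sub>n\<^sub>+\<^sub>1\<close>
  annihilates and by (*) \<open>e\<^sub>1\<close> never occurs in a product.\<close>

text \<open>Coordinate form of \<open>M (e\<^sub>i e\<^sub>j) = (M e\<^sub>i) (M e\<^sub>j)\<close>, compared at \<open>e\<^sub>k\<close>.\<close>

definition structure_hom :: "nat \<Rightarrow> (nat \<Rightarrow> nat \<Rightarrow> nat \<Rightarrow> complex) \<Rightarrow> (nat \<Rightarrow> nat \<Rightarrow> complex) \<Rightarrow> bool" where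
  "structure_hom N c M \<longleftrightarrow> (\<forall>i\<in>{1..N}. \<forall>j\<in>{1..N}. \<forall>k\<in>{1..N}.
     (\<Sum>l\<in>{1..N}. M k l * c i j l) = (\<Sum>p\<in>{1..N}. \<Sum>q\<in>{1..N}. M p i * M q j * c p q k))"

lemma basis_vec_in_vecs: "i \<in> {1..N} \<Longrightarrow> basis_vec i \<in> vecs N"
  by (auto simp: basis_vec_def vecs_def)

lemma sum_basis_vec_mult:
  assumes "finite S" "i \<in> S"
  shows "(\<Sum>p\<in>S. basis_vec i p * f p) = f i"
proof -
  have "(\<Sum>p\<in>S. basis_vec i p * f p) = (\<Sum>p\<in>S. if p = i then f p else 0)"
    by (rule sum.cong) (auto simp: basis_vec_def)
  with assms show ?thesis by simp
qed

lemma sum_mult_basis_vec: "finite S \<Longrightarrow> i \<in> S \<Longrightarrow> (\<Sum>p\<in>S. f p * basis_vec i p) = f i"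
  using sum_basis_vec_mult[of S i f] by (simp add: mult.commute)

lemma alg_mult_basis_vec:
  assumes "i \<in> {1..N}" "j \<in> {1..N}"
  shows "alg_mult N c (basis_vec i) (basis_vec j) = (\<lambda>k. if k \<in> {1..N} then c i j k else 0)"
proof -
  have "(\<Sum>p\<in>{1..N}. \<Sum>q\<in>{1..N}. basis_vec i p * basis_vec j q * c p q k) = c i j k" for k
    using assms by (simp add: mult.assoc sum_distrib_left[symmetric] sum_basis_vec_mult)
  then show ?thesis by (simp add: alg_mult_def cong: if_cong)
qed

lemma mat_apply_basis_vec:
  assumes "j \<in> {1..N}"
  shows "mat_apply N M (basis_vec j) = (\<lambda>i. if i \<in> {1..N} then M i j else 0)"
  using assms by (simp add: mat_apply_def sum_mult_basis_vec cong: if_cong)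

lemma mat_apply_in_vecs: "mat_apply N M a \<in> vecs N"
  by (simp add: mat_apply_def vecs_def)

lemma mat_apply_diff: "mat_apply N M (\<lambda>i. a i - b i) = (\<lambda>i. mat_apply N M a i - mat_apply N M b i)"
  by (simp add: mat_apply_def sum_subtractf right_diff_distrib fun_eq_iff)

lemma mat_apply_scale: "mat_apply N M (\<lambda>i. u * a i) = (\<lambda>i. u * mat_apply N M a i)"
  by (simp add: mat_apply_def sum_distrib_left mult_ac fun_eq_iff)

lemma sum_swap3:
  "(\<Sum>x\<in>A. \<Sum>y\<in>B. \<Sum>z\<in>C. f x y z) = (\<Sum>y\<in>B. \<Sum>z\<in>C. \<Sum>x\<in>A. f x y z)"
  by (subst sum.swap) (rule sum.cong[OF refl], rule sum.swap)

lemma sum_swap4: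
  "(\<Sum>w\<in>A. \<Sum>x\<in>B. \<Sum>y\<in>C. \<Sum>z\<in>D. f w x y z) = (\<Sum>y\<in>C. \<Sum>z\<in>D. \<Sum>w\<in>A. \<Sum>x\<in>B. f w x y z)"
  by (simp only: sum_swap3[of _ A] sum.swap[of _ B])

lemma mat_apply_alg_mult:
  assumes "k \<in> {1..N}"
  shows "mat_apply N M (alg_mult N c a b) k =
    (\<Sum>p\<in>{1..N}. \<Sum>q\<in>{1..N}. a p * b q * (\<Sum>l\<in>{1..N}. M k l * c p q l))"
proof -
  have "mat_apply N M (alg_mult N c a b) k =
      (\<Sum>l\<in>{1..N}. \<Sum>p\<in>{1..N}. \<Sum>q\<in>{1..N}. a p * b q * (M k l * c p q l))"
    using assms by (simp add: mat_apply_def alg_mult_def sum_distrib_left mult_ac)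
  also have "\<dots> = (\<Sum>p\<in>{1..N}. \<Sum>q\<in>{1..N}. \<Sum>l\<in>{1..N}. a p * b q * (M k l * c p q l))"
    by (rule sum_swap3)
  finally show ?thesis by (simp add: sum_distrib_left)
qed

lemma alg_mult_mat_apply:
  assumes "k \<in> {1..N}"
  shows "alg_mult N c (mat_apply N M a) (mat_apply N M b) k =
    (\<Sum>p\<in>{1..N}. \<Sum>q\<in>{1..N}. a p * b q * (\<Sum>r\<in>{1..N}. \<Sum>s\<in>{1..N}. M r p * M s q * c r s k))"
proof -
  have "alg_mult N c (mat_apply N M a) (mat_apply N M b) k =
      (\<Sum>r\<in>{1..N}. \<Sum>s\<in>{1..N}. \<Sum>q\<in>{1..N}. \<Sum>p\<in>{1..N}. a p * b q * (M r p * M s q * c r s k))"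
    using assms by (simp add: mat_apply_def alg_mult_def sum_distrib_left sum_distrib_right mult_ac)
  also have "\<dots> = (\<Sum>r\<in>{1..N}. \<Sum>s\<in>{1..N}. \<Sum>p\<in>{1..N}. \<Sum>q\<in>{1..N}. a p * b q * (M r p * M s q * c r s k))"
    by (rule sum.cong[OF refl], rule sum.cong[OF refl], rule sum.swap)
  also have "\<dots> = (\<Sum>p\<in>{1..N}. \<Sum>q\<in>{1..N}. \<Sum>r\<in>{1..N}. \<Sum>s\<in>{1..N}. a p * b q * (M r p * M s q * c r s k))"
    by (rule sum_swap4)
  finally show ?thesis by (simp add: sum_distrib_left)
qed

lemma alg_hom_iff_structure_hom:
  "(\<forall>a\<in>vecs N. \<forall>b\<in>vecs N.
      mat_apply N M (alg_mult N c a b) = alg_mult N c (mat_apply N M a) (mat_apply N M b))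
   \<longleftrightarrow> structure_hom N c M"
proof
  assume hom: "\<forall>a\<in>vecs N. \<forall>b\<in>vecs N.
      mat_apply N M (alg_mult N c a b) = alg_mult N c (mat_apply N M a) (mat_apply N M b)"
  show "structure_hom N c M"
    unfolding structure_hom_def
  proof (intro ballI)
    fix i j k assume ijk: "i \<in> {1..N}" "j \<in> {1..N}" "k \<in> {1..N}"
    have "mat_apply N M (alg_mult N c (basis_vec i) (basis_vec j)) k
        = alg_mult N c (mat_apply N M (basis_vec i)) (mat_apply N M (basis_vec j)) k"
      using hom ijk by (simp add: basis_vec_in_vecs)
    then show "(\<Sum>l\<in>{1..N}. M k l * c i j l) = (\<Sum>p\<in>{1..N}. \<Sum>q\<in>{1..N}. M p i * M q j * c p q k)"
      using ijk by (simp add: mat_apply_alg_mult alg_mult_mat_apply mult.assoc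
          sum_distrib_left[symmetric] sum_basis_vec_mult)
  qed
next
  assume sh: "structure_hom N c M"
  have "mat_apply N M (alg_mult N c a b) k = alg_mult N c (mat_apply N M a) (mat_apply N M b) k"
    for a b k
  proof (cases "k \<in> {1..N}")
    case True
    with sh show ?thesis
      by (simp add: mat_apply_alg_mult alg_mult_mat_apply structure_hom_def)
  qed (auto simp: mat_apply_def alg_mult_def)
  then show "\<forall>a\<in>vecs N. \<forall>b\<in>vecs N.
      mat_apply N M (alg_mult N c a b) = alg_mult N c (mat_apply N M a) (mat_apply N M b)"
    by (simp add: fun_eq_iff)
qed

lemma alg_aut_iff:
  "M \<in> alg_aut N c \<longleftrightarrow>
     M \<in> mats N \<and> bij_betw (mat_apply N M) (vecs N) (vecs N) \<and> structure_hom N c M"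
  by (simp add: alg_aut_def alg_hom_iff_structure_hom)

lemma alg_aut_image_alg_ann:
  assumes "M \<in> alg_aut N c" "a \<in> alg_ann N c"
  shows "mat_apply N M a \<in> alg_ann N c"
  unfolding alg_ann_def
proof (intro CollectI conjI ballI)
  have surj: "mat_apply N M ` vecs N = vecs N" and
    hom: "\<forall>a\<in>vecs N. \<forall>b\<in>vecs N.
      mat_apply N M (alg_mult N c a b) = alg_mult N c (mat_apply N M a) (mat_apply N M b)"
    using assms(1) by (auto simp: alg_aut_def bij_betw_def)
  have zero: "mat_apply N M (\<lambda>_. 0) = (\<lambda>_. 0)"
    by (simp add: mat_apply_def fun_eq_iff)
  fix b assume "b \<in> vecs N"
  then obtain b' where b': "b' \<in> vecs N" "b = mat_apply N M b'"
    using surj by auto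
  from assms(2) b'(1) have a: "a \<in> vecs N"
    and ann: "alg_mult N c a b' = (\<lambda>_. 0)" "alg_mult N c b' a = (\<lambda>_. 0)"
    by (auto simp: alg_ann_def)
  have "alg_mult N c (mat_apply N M a) b = mat_apply N M (alg_mult N c a b')"
    using hom a b' by simp
  then show "alg_mult N c (mat_apply N M a) b = (\<lambda>_. 0)"
    by (simp add: ann zero)
  have "alg_mult N c b (mat_apply N M a) = mat_apply N M (alg_mult N c b' a)"
    using hom a b' by simp
  then show "alg_mult N c b (mat_apply N M a) = (\<lambda>_. 0)"
    by (simp add: ann zero)
qed (rule mat_apply_in_vecs)

lemma alg_ann_basis_vecD:
  assumes "basis_vec i \<in> alg_ann N c" "i \<in> {1..N}" "j \<in> {1..N}" "k \<in> {1..N}"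
  shows "c i j k = 0" "c j i k = 0"
proof -
  have "alg_mult N c (basis_vec i) (basis_vec j) k = 0" "alg_mult N c (basis_vec j) (basis_vec i) k = 0"
    using assms(1,3) by (auto simp: alg_ann_def basis_vec_in_vecs)
  then show "c i j k = 0" "c j i k = 0"
    using assms(2-4) by (simp_all add: alg_mult_basis_vec)
qed

lemma sum_shear_mat_col:
  assumes "j \<in> {1..m}"
  shows "(\<Sum>p\<in>{1..m}. shear_mat m y p j * g p) = g j + (if j = 1 then y * g m else 0)"
proof -
  have "(\<Sum>p\<in>{1..m}. shear_mat m y p j * g p) =
      (\<Sum>p\<in>{1..m}. (if p = j then g j else 0) + (if p = m then (if j = 1 then y * g m else 0) else 0))"
    using assms by (intro sum.cong refl) (auto simp: shear_mat_def algebra_simps)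
  with assms show ?thesis
    by (simp add: sum.distrib)
qed

lemma sum_shear_mat_row:
  assumes "k \<in> {1..m}"
  shows "(\<Sum>l\<in>{1..m}. shear_mat m y k l * g l) = g k + (if k = m then y * g 1 else 0)"
proof -
  have "(\<Sum>l\<in>{1..m}. shear_mat m y k l * g l) =
      (\<Sum>l\<in>{1..m}. (if l = k then g k else 0) + (if l = 1 then (if k = m then y * g 1 else 0) else 0))"
    using assms by (intro sum.cong refl) (auto simp: shear_mat_def algebra_simps)
  with assms show ?thesis
    by (simp add: sum.distrib)
qed

lemma mat_apply_shear_mat:
  assumes "a \<in> vecs m" "m \<ge> 1"
  shows "mat_apply m (shear_mat m x) a = (\<lambda>i. a i + (if i = m then x * a 1 else 0))"
proof
  fix i
  show "mat_apply m (shear_mat m x) a i = a i + (if i = m then x * a 1 else 0)"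
  proof (cases "i \<in> {1..m}")
    case True
    then show ?thesis
      using sum_shear_mat_row[OF True, of x a] by (simp add: mat_apply_def)
  qed (use assms in \<open>auto simp: mat_apply_def vecs_def\<close>)
qed

lemma bij_betw_mat_apply_shear_mat:
  assumes "m \<ge> 2"
  shows "bij_betw (mat_apply m (shear_mat m x)) (vecs m) (vecs m)"
proof (rule bij_betw_byWitness[where f' = "mat_apply m (shear_mat m (- x))"])
  have "a \<in> vecs m \<Longrightarrow> (\<lambda>i. a i + (if i = m then y * a 1 else 0)) \<in> vecs m" for a y
    using assms by (auto simp: vecs_def)
  then show "\<forall>a\<in>vecs m. mat_apply m (shear_mat m (- x)) (mat_apply m (shear_mat m x) a) = a"
    "\<forall>a\<in>vecs m. mat_apply m (shear_mat m x) (mat_apply m (shear_mat m (- x)) a) = a"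
    using assms by (simp_all add: mat_apply_shear_mat fun_eq_iff)
qed (auto simp: mat_apply_in_vecs)

lemma shear_mat_in_alg_aut:
  assumes "m \<ge> 2"
    and no_e1: "\<forall>i\<in>{1..m}. \<forall>j\<in>{1..m}. c i j 1 = 0"
    and ann: "basis_vec m \<in> alg_ann m c"
  shows "shear_mat m x \<in> alg_aut m c"
proof -
  have "structure_hom m c (shear_mat m x)"
    unfolding structure_hom_def
  proof (intro ballI)
    fix i j k assume ijk: "i \<in> {1..m}" "j \<in> {1..m}" "k \<in> {1..m}"
    have m: "m \<in> {1..m}" "m \<noteq> 1" using assms(1) by auto
    have cm: "c m q k = 0" "c q m k = 0" if "q \<in> {1..m}" for q
      using alg_ann_basis_vecD[OF ann m(1)] that ijk(3) by auto
    have "(\<Sum>p\<in>{1..m}. \<Sum>q\<in>{1..m}. shear_mat m x p i * shear_mat m x q j * c p q k)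
        = (\<Sum>p\<in>{1..m}. shear_mat m x p i * (\<Sum>q\<in>{1..m}. shear_mat m x q j * c p q k))"
      by (simp add: sum_distrib_left mult.assoc)
    also have "\<dots> = (\<Sum>p\<in>{1..m}. shear_mat m x p i * c p j k)"
      using sum_shear_mat_col[OF ijk(2), of x] cm m by (intro sum.cong refl) simp
    also have "\<dots> = c i j k"
      using sum_shear_mat_col[OF ijk(1), of x] cm m ijk by simp
    also have "\<dots> = (\<Sum>l\<in>{1..m}. shear_mat m x k l * c i j l)"
      using sum_shear_mat_row[OF ijk(3), of x] no_e1 ijk by simp
    finally show "(\<Sum>l\<in>{1..m}. shear_mat m x k l * c i j l) =
        (\<Sum>p\<in>{1..m}. \<Sum>q\<in>{1..m}. shear_mat m x p i * shear_mat m x q j * c p q k)"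
      by simp
  qed
  moreover have "shear_mat m x \<in> mats m"
    by (simp add: mats_def shear_mat_def)
  ultimately show ?thesis
    using bij_betw_mat_apply_shear_mat[OF assms(1)] by (simp add: alg_aut_iff)
qed

text \<open>If column \<open>n+1\<close> of \<open>M\<close> is a multiple of \<open>e\<^sub>n\<^sub>+\<^sub>1\<close>, the upper left block is the map
  induced on \<open>\<A>/\<langle>e\<^sub>n\<^sub>+\<^sub>1\<rangle>\<close>; that quotient is the algebra \<open>c\<close> truncated to \<open>{1..n}\<close>,
  whose automorphisms are \<open>alg_aut n c\<close>.\<close>

definition mat_restrict :: "nat \<Rightarrow> (nat \<Rightarrow> nat \<Rightarrow> complex) \<Rightarrow> nat \<Rightarrow> nat \<Rightarrow> complex" where
  "mat_restrict n M = (\<lambda>i j. if i \<in> {1..n} \<and> j \<in> {1..n} then M i j else 0)"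

lemma mat_restrict_in_mats: "mat_restrict n M \<in> mats n"
  by (simp add: mats_def mat_restrict_def)

lemma mat_apply_Suc_mat_restrict:
  assumes "i \<in> {1..n}"
  shows "mat_apply (Suc n) M a i = mat_apply n (mat_restrict n M) a i + M i (Suc n) * a (Suc n)"
proof -
  have "(\<Sum>j\<in>{1..n}. M i j * a j) = (\<Sum>j\<in>{1..n}. mat_restrict n M i j * a j)"
    using assms by (intro sum.cong refl) (simp add: mat_restrict_def)
  with assms show ?thesis
    by (simp add: mat_apply_def)
qed

lemma inj_on_mat_apply_mat_restrict:
  assumes inj: "inj_on (mat_apply (Suc n) M) (vecs (Suc n))"
    and col: "\<forall>k\<in>{1..n}. M k (Suc n) = 0"
  shows "inj_on (mat_apply n (mat_restrict n M)) (vecs n)"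
proof (rule inj_onI)
  let ?A = "mat_apply (Suc n) M" and ?e = "basis_vec (Suc n)"
  have e: "?e \<in> vecs (Suc n)" by (simp add: basis_vec_in_vecs)
  have Ae: "?A ?e = (\<lambda>i. M (Suc n) (Suc n) * ?e i)"
    using mat_apply_basis_vec[of "Suc n" "Suc n" M] col by (auto simp: basis_vec_def fun_eq_iff)
  have "M (Suc n) (Suc n) \<noteq> 0"
  proof
    assume "M (Suc n) (Suc n) = 0"
    then have "?A ?e = ?A (\<lambda>_. 0)"
      unfolding Ae by (simp add: mat_apply_def fun_eq_iff)
    with inj e have "?e = (\<lambda>_. 0)"
      by (auto simp: vecs_def dest: inj_onD)
    then have "?e (Suc n) = 0" by simp
    then show False by (simp add: basis_vec_def)
  qed
  fix a b assume a: "a \<in> vecs n" and b: "b \<in> vecs n"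
    and eq: "mat_apply n (mat_restrict n M) a = mat_apply n (mat_restrict n M) b"
  define d where "d = (\<lambda>i. a i - b i)"
  define s where "s = ?A d (Suc n) / M (Suc n) (Suc n)"
  have d: "d \<in> vecs n" "d \<in> vecs (Suc n)"
    using a b by (auto simp: d_def vecs_def)
  have "mat_apply n (mat_restrict n M) d = (\<lambda>_. 0)"
    using eq by (simp add: d_def mat_apply_diff)
  then have "?A d i = 0" if "i \<in> {1..n}" for i
    using mat_apply_Suc_mat_restrict[OF that] d(1) by (simp add: vecs_def)
  then have "?A d i = (s * M (Suc n) (Suc n)) * ?e i" for i
    using \<open>M (Suc n) (Suc n) \<noteq> 0\<close> mat_apply_in_vecs[of "Suc n" M d]
    by (cases "i \<in> {1..n}") (auto simp: s_def basis_vec_def vecs_def)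
  then have "?A d = ?A (\<lambda>i. s * ?e i)"
    by (simp add: mat_apply_scale Ae mult.assoc fun_eq_iff)
  with inj d(2) have "d = (\<lambda>i. s * ?e i)"
    by (auto simp: vecs_def basis_vec_def dest: inj_onD)
  moreover have "d (Suc n) = 0"
    using d(1) by (simp add: vecs_def)
  ultimately show "a = b"
    by (auto simp: d_def basis_vec_def fun_eq_iff)
qed

lemma mat_apply_mat_restrict_image:
  assumes surj: "mat_apply (Suc n) M ` vecs (Suc n) = vecs (Suc n)"
    and col: "\<forall>k\<in>{1..n}. M k (Suc n) = 0"
  shows "mat_apply n (mat_restrict n M) ` vecs n = vecs n"
proof
  show "mat_apply n (mat_restrict n M) ` vecs n \<subseteq> vecs n"
    by (auto simp: mat_apply_in_vecs)
  show "vecs n \<subseteq> mat_apply n (mat_restrict n M) ` vecs n"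
  proof
    fix b assume b: "b \<in> vecs n"
    then have "b \<in> vecs (Suc n)" by (auto simp: vecs_def)
    with surj obtain a where a: "a \<in> vecs (Suc n)" "b = mat_apply (Suc n) M a"
      by auto
    define a' where "a' = (\<lambda>i. if i \<in> {1..n} then a i else 0)"
    have "mat_apply n (mat_restrict n M) a' = mat_apply n (mat_restrict n M) a"
      by (simp add: mat_apply_def a'_def fun_eq_iff)
    also have "\<dots> = b"
      using b col a(2) mat_apply_Suc_mat_restrict[of _ n M a]
      by (auto simp: mat_apply_def vecs_def fun_eq_iff)
    finally show "b \<in> mat_apply n (mat_restrict n M) ` vecs n"
      by (force simp: a'_def vecs_def)
  qed
qed

lemma structure_hom_mat_restrict:
  assumes sh: "structure_hom (Suc n) c M"
    and col: "\<forall>k\<in>{1..n}. M k (Suc n) = 0"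
    and ann: "basis_vec (Suc n) \<in> alg_ann (Suc n) c"
  shows "structure_hom n c (mat_restrict n M)"
  unfolding structure_hom_def
proof (intro ballI)
  fix i j k assume ijk: "i \<in> {1..n}" "j \<in> {1..n}" "k \<in> {1..n}"
  have N: "Suc n \<in> {1..Suc n}" by simp
  have cN: "c (Suc n) q k = 0" "c q (Suc n) k = 0" if "q \<in> {1..Suc n}" for q
    using alg_ann_basis_vecD[OF ann N] that ijk(3) by auto
  let ?M' = "mat_restrict n M"
  have "(\<Sum>l\<in>{1..n}. ?M' k l * c i j l) = (\<Sum>l\<in>{1..Suc n}. M k l * c i j l)"
    using ijk col by (simp add: mat_restrict_def)
  also have "\<dots> = (\<Sum>p\<in>{1..Suc n}. \<Sum>q\<in>{1..Suc n}. M p i * M q j * c p q k)"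
    using sh ijk unfolding structure_hom_def by simp
  also have "\<dots> = (\<Sum>p\<in>{1..n}. \<Sum>q\<in>{1..n}. M p i * M q j * c p q k)"
    using cN by simp
  also have "\<dots> = (\<Sum>p\<in>{1..n}. \<Sum>q\<in>{1..n}. ?M' p i * ?M' q j * c p q k)"
    using ijk by (intro sum.cong refl) (simp add: mat_restrict_def)
  finally show "(\<Sum>l\<in>{1..n}. ?M' k l * c i j l) =
      (\<Sum>p\<in>{1..n}. \<Sum>q\<in>{1..n}. ?M' p i * ?M' q j * c p q k)" .
qed

lemma mat_restrict_in_alg_aut:
  assumes "M \<in> alg_aut (Suc n) c"
    and "\<forall>k\<in>{1..n}. M k (Suc n) = 0"
    and "basis_vec (Suc n) \<in> alg_ann (Suc n) c"
  shows "mat_restrict n M \<in> alg_aut n c"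
  using assms inj_on_mat_apply_mat_restrict mat_apply_mat_restrict_image structure_hom_mat_restrict
  by (auto simp: alg_aut_iff bij_betw_def mat_restrict_in_mats)

lemma alg_aut_last_column:
  assumes aut: "M \<in> alg_aut (Suc n) c"
    and ann: "basis_vec (Suc n) \<in> alg_ann (Suc n) c"
    and ann_span: "alg_ann (Suc n) c \<subseteq> {(\<lambda>k. t * basis_vec (Suc n) k) | t. True}"
    and k: "k \<in> {1..n}"
  shows "M k (Suc n) = 0"
proof -
  have "mat_apply (Suc n) M (basis_vec (Suc n)) \<in> alg_ann (Suc n) c"
    by (rule alg_aut_image_alg_ann[OF aut ann])
  then obtain t where t: "mat_apply (Suc n) M (basis_vec (Suc n)) = (\<lambda>k. t * basis_vec (Suc n) k)"
    using ann_span by auto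
  have "M k (Suc n) = t * basis_vec (Suc n) k"
    using fun_cong[OF t, of k] k by (simp add: mat_apply_basis_vec)
  with k show ?thesis
    by (simp add: basis_vec_def)
qed

lemma structure_hom_last_row:
  assumes sh: "structure_hom (Suc n) c M"
    and ann: "basis_vec (Suc n) \<in> alg_ann (Suc n) c"
    and block: "mat_restrict n M = shear_mat n y"
    and ij: "i \<in> {1..n}" "j \<in> {1..n}"
  shows "(\<Sum>l\<in>{1..Suc n}. M (Suc n) l * c i j l) =
    c i j (Suc n) + (if j = 1 then y * c i n (Suc n) else 0)
    + (if i = 1 then y * (c n j (Suc n) + (if j = 1 then y * c n n (Suc n) else 0)) else 0)"
proof -
  have N: "Suc n \<in> {1..Suc n}" by simp
  have cN: "c (Suc n) q (Suc n) = 0" "c q (Suc n) (Suc n) = 0" if "q \<in> {1..Suc n}" for q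
    using alg_ann_basis_vecD[OF ann N that N] by auto
  have block_eq: "M p q = shear_mat n y p q" if "p \<in> {1..n}" "q \<in> {1..n}" for p q
    using fun_cong[OF fun_cong[OF block, of p], of q] that by (simp add: mat_restrict_def)
  have "(\<Sum>l\<in>{1..Suc n}. M (Suc n) l * c i j l) =
      (\<Sum>p\<in>{1..Suc n}. \<Sum>q\<in>{1..Suc n}. M p i * M q j * c p q (Suc n))"
    using sh ij unfolding structure_hom_def by simp
  also have "\<dots> = (\<Sum>p\<in>{1..n}. \<Sum>q\<in>{1..n}. M p i * M q j * c p q (Suc n))"
    using cN by simp
  also have "\<dots> = (\<Sum>p\<in>{1..n}. shear_mat n y p i * (\<Sum>q\<in>{1..n}. shear_mat n y q j * c p q (Suc n)))"
    using ij block_eq by (simp add: sum_distrib_left mult.assoc)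
  also have "\<dots> = (\<Sum>p\<in>{1..n}. shear_mat n y p i * (c p j (Suc n) + (if j = 1 then y * c p n (Suc n) else 0)))"
    using sum_shear_mat_col[OF ij(2), of y] by simp
  also have "\<dots> = c i j (Suc n) + (if j = 1 then y * c i n (Suc n) else 0)
      + (if i = 1 then y * (c n j (Suc n) + (if j = 1 then y * c n n (Suc n) else 0)) else 0)"
    by (rule sum_shear_mat_col[OF ij(1)])
  finally show ?thesis .
qed

lemma shear_extension_last_row:
  assumes "n \<ge> 2" and star: "cond_star (Suc n) c"
    and sq: "\<forall>i\<in>{1..n}. \<forall>k\<in>{1..Suc n}. c i i k = (if k = Suc i then 1 else 0)"
    and ann: "basis_vec (Suc n) \<in> alg_ann (Suc n) c"
    and sh: "structure_hom (Suc n) c M"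
    and block: "mat_restrict n M = shear_mat n y"
  shows "y = 0" "M (Suc n) (Suc n) = 1" "\<forall>j\<in>{2..n}. M (Suc n) j = 0"
proof -
  have n: "n \<in> {1..n}" "1 \<in> {1..n}" "n \<noteq> 1" using assms(1) by auto
  note row = structure_hom_last_row[OF sh ann block]
  have sq_row: "(\<Sum>l\<in>{1..Suc n}. M (Suc n) l * c i i l) = M (Suc n) (Suc i)" if "i \<in> {1..n}" for i
  proof -
    have "(\<Sum>l\<in>{1..Suc n}. M (Suc n) l * c i i l) =
        (\<Sum>l\<in>{1..Suc n}. if l = Suc i then M (Suc n) (Suc i) else 0)"
      using sq that by (intro sum.cong refl) auto
    with that show ?thesis by simp
  qed
  show diag: "M (Suc n) (Suc n) = 1"
    using row[OF n(1) n(1)] sq_row[OF n(1)] sq n by simp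
  have "(\<Sum>l\<in>{1..Suc n}. M (Suc n) l * c n 1 l) = c n 1 (Suc n)"
    using star diag by (simp add: cond_star_def)
  then show "y = 0"
    using row[OF n(1) n(2)] sq n by simp
  show "\<forall>j\<in>{2..n}. M (Suc n) j = 0"
  proof
    fix j assume "j \<in> {2..n}"
    then obtain k where k: "j = Suc k" "1 \<le> k" "k < n"
      by (cases j) auto
    then show "M (Suc n) j = 0"
      using row[of k k] sq_row[of k] sq by (simp add: \<open>y = 0\<close> cong: if_cong)
  qed
qed

lemma shear_extension:
  assumes "n \<ge> 2" "cond_star (Suc n) c"
    and "\<forall>i\<in>{1..n}. \<forall>k\<in>{1..Suc n}. c i i k = (if k = Suc i then 1 else 0)"
    and "basis_vec (Suc n) \<in> alg_ann (Suc n) c"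
    and M: "M \<in> mats (Suc n)" "structure_hom (Suc n) c M"
    and col: "\<forall>k\<in>{1..n}. M k (Suc n) = 0"
    and block: "mat_restrict n M = shear_mat n y"
  shows "M = shear_mat (Suc n) (M (Suc n) 1)"
proof (intro ext)
  fix i j
  have n: "n \<noteq> 1" "n \<noteq> 0" using assms(1) by simp_all
  note last_row = shear_extension_last_row[OF assms(1-4) M(2) block]
  show "M i j = shear_mat (Suc n) (M (Suc n) 1) i j"
  proof (cases "i \<in> {1..n} \<and> j \<in> {1..n}")
    case True
    then show ?thesis
      using fun_cong[OF fun_cong[OF block, of i], of j] n last_row(1)
      by (auto simp: mat_restrict_def shear_mat_def)
  next
    case False
    show ?thesis
    proof (cases "i \<in> {1..Suc n} \<and> j \<in> {1..Suc n}")
      case True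
      with False have "j = Suc n \<or> i = Suc n \<and> j \<in> {1..n}"
        by auto
      with True show ?thesis
        using col last_row(2,3) n by (auto simp: shear_mat_def)
    next
      case outside: False
      then have "M i j = 0"
        using M(1) by (simp add: mats_def)
      with outside show ?thesis
        unfolding shear_mat_def by (simp only: if_False)
    qed
  qed
qed

theorem mainTheorem10:
  fixes n :: nat and c :: "nat \<Rightarrow> nat \<Rightarrow> nat \<Rightarrow> complex"
  assumes "n \<ge> 2"
    and "cond_star (n+1) c"
    and "alg_ann (n+1) c = {(\<lambda>k. t * basis_vec (n+1) k) | t. True}"
    and "\<forall>k\<in>{1..n+1}. c 1 n k = 0"
    and "\<forall>i\<in>{1..n}. \<forall>k\<in>{1..n+1}. c i i k = (if k = i + 1 then 1 else 0)"
    and "alg_aut n c = {shear_mat n x | x. True}"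
  shows "alg_aut (n+1) c = {shear_mat (n+1) x | x. True}"
proof -
  have ann: "basis_vec (Suc n) \<in> alg_ann (Suc n) c"
  proof -
    have "(\<lambda>k. 1 * basis_vec (n+1) k) \<in> alg_ann (n+1) c"
      using assms(3) by blast
    then show ?thesis by simp
  qed
  show ?thesis
  proof (intro equalityI subsetI)
    fix M assume M: "M \<in> alg_aut (n+1) c"
    then have col: "\<forall>k\<in>{1..n}. M k (Suc n) = 0"
      using alg_aut_last_column[of M n c] ann assms(3) by simp
    then obtain y where "mat_restrict n M = shear_mat n y"
      using mat_restrict_in_alg_aut[of M n c] M ann assms(6) by auto
    then have "M = shear_mat (Suc n) (M (Suc n) 1)"
      using shear_extension[of n c M] assms(1,2,5) M col ann by (simp add: alg_aut_iff)
    then show "M \<in> {shear_mat (n+1) x | x. True}"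
      by auto
  next
    fix M assume "M \<in> {shear_mat (n+1) x | x. True}"
    moreover have "\<forall>i\<in>{1..Suc n}. \<forall>j\<in>{1..Suc n}. c i j 1 = 0"
      using assms(2) by (force simp: cond_star_def)
    ultimately show "M \<in> alg_aut (n+1) c"
      using shear_mat_in_alg_aut[of "Suc n" c] assms(1) ann by auto
  qed
qed

end
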